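(* Let $t, b \ge 1$ be integers and $T$ a finite non-empty subset of $\mathbb{Z}^b$. Let $S$ be a set and let $\mathcal{F}$ be a family consisting of at least $(t-1)|T|^2$ pairwise disjoint subsets of $S$. Then there is a set $X \subset \mathbb{Z}^b \times S$ satisfying: (1) $X$ is a union of pairwise disjoint sets of the form $(T+x)\times A$ with $x \in \mathbb{Z}^b$ and $A \in \mathcal{F}$; and (2) for each $x \in \mathbb{Z}^b$ there is some $m \equiv 1 \pmod t$ such that $\{y \in S : (x,y) \in X\}$ is a union of $m$ distinct members of $\mathcal{F}$. *)

theory Defs
  imports "HOL-Analysis.Analysis" "HOL-Number_Theory.Cong"
begin

end

theory Submission
  imports Defs
begin

text \<open>
  An integer linear form \<open>\<phi>\<close> injective on \<open>T\<close> reduces the problem to \<open>\<int>\<close>. There we need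
  \<open>g : \<int> \<rightarrow> {0..<t}\<close> with \<open>\<Sum>v\<in>T. g (n - \<phi> v) \<equiv> 1 (mod t)\<close> for all \<open>n\<close>: on \<open>\<nat>\<close> this equation
  determines \<open>g n\<close> from finitely many earlier values, so the solution is eventually periodic
  and extends periodically to \<open>\<int>\<close>. Next give every \<open>n\<close> a set of \<open>g n\<close> members of \<open>\<F>\<close> such that
  \<open>n - \<phi> u\<close> and \<open>n - \<phi> v\<close> get disjoint sets whenever \<open>u \<noteq> v\<close>; every \<open>n\<close> has fewer than \<open>|T|\<^sup>2\<close>
  such neighbours, so a greedy choice succeeds with \<open>(t - 1)|T|\<^sup>2\<close> members. Putting
  \<open>(T + x) \<times> A\<close> into \<open>X\<close> for every \<open>A\<close> given to \<open>\<phi> x\<close>, the fibre over \<open>x\<close> is the union of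
  \<open>\<Sum>v\<in>T. g (\<phi> x - \<phi> v) \<equiv> 1\<close> distinct members of \<open>\<F>\<close>.
\<close>

lemma eventually_periodic_if_window_determined:
  fixes r :: "nat \<Rightarrow> 'a"
  assumes fin: "finite (range r)"
    and window: "\<And>i j. (\<forall>k<W. r (i + k) = r (j + k)) \<Longrightarrow> r (i + W) = r (j + W)"
  obtains P i where "0 < P" "\<And>n. i \<le> n \<Longrightarrow> r (n + P) = r n"
proof -
  define w where "w n = map (\<lambda>k. r (n + k)) [0..<W]" for n
  have "range w \<subseteq> {xs. set xs \<subseteq> range r \<and> length xs = W}" by (auto simp: w_def)
  then have "finite (range w)" using finite_lists_length_eq[OF fin, of W] finite_subset by blast
  then have "\<not> inj w" using finite_imageD infinite_UNIV_nat by blast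
  then obtain i j where ij: "i < j" "w i = w j" unfolding inj_def by (metis linorder_neqE_nat)
  have same: "r (i + s) = r (j + s)" for s
  proof (induction s rule: less_induct)
    case (less s)
    show ?case
    proof (cases "s < W")
      case True
      then show ?thesis using arg_cong[OF ij(2), of "\<lambda>xs. xs ! s"] by (simp add: w_def)
    next
      case False
      then obtain s' where s': "s = s' + W" by (metis add.commute le_add_diff_inverse not_less)
      have "r (i + s' + k) = r (j + s' + k)" if "k < W" for k
        using less[of "s' + k"] that s' by (simp add: add.assoc)
      then have "r (i + s' + W) = r (j + s' + W)" by (intro window) auto
      then show ?thesis by (simp add: s' add.assoc)
    qed
  qed
  show ?thesis
  proof
    show "0 < j - i" using ij by simp
    show "r (n + (j - i)) = r n" if "i \<le> n" for n
      using same[of "n - i"] that ij by (simp add: add.commute)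
  qed
qed

lemma periodic_extension_to_int:
  fixes r :: "nat \<Rightarrow> 'a"
  assumes "0 < P" and periodic: "\<And>n. i \<le> n \<Longrightarrow> r (n + P) = r n"
  obtains g :: "int \<Rightarrow> 'a" where "range g \<subseteq> range r"
    and "\<And>m n. i \<le> n \<Longrightarrow> [int n = m] (mod int P) \<Longrightarrow> g m = r n"
proof -
  define g where "g m = r (i + nat ((m - int i) mod int P))" for m
  have multiple: "r (n + q * P) = r n" if "i \<le> n" for n q
  proof (induction q)
    case (Suc q)
    have "r (n + Suc q * P) = r (n + q * P + P)" by (simp add: algebra_simps)
    with Suc periodic[of "n + q * P"] that show ?case by simp
  qed simp
  show ?thesis
  proof
    show "range g \<subseteq> range r" by (auto simp: g_def)
    show "g m = r n" if "i \<le> n" "[int n = m] (mod int P)" for m n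
    proof -
      define s where "s = n - i"
      have "int s = int n - int i" using that(1) by (simp add: s_def)
      then have "(m - int i) mod int P = int s mod int P"
        using that(2) unfolding cong_def by (metis mod_diff_cong)
      also have "\<dots> = int (s mod P)" by (rule of_nat_mod[symmetric])
      finally have "nat ((m - int i) mod int P) = s mod P" by simp
      then have "g m = r (i + s mod P)" by (simp add: g_def)
      also have "\<dots> = r (i + s mod P + s div P * P)" by (rule multiple[symmetric]) simp
      also have "i + s mod P + s div P * P = n" using that(1) by (simp add: s_def)
      finally show ?thesis .
    qed
  qed
qed

text \<open>
  For \<open>0 \<in> D\<close> this is the solution of \<open>\<Sum>d\<in>D. r (n - d) \<equiv> 1 (mod t)\<close> on \<open>\<nat>\<close>, the summand for
  \<open>d = 0\<close> being \<open>r n\<close> itself; terms with \<open>d > n\<close> are dropped.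
\<close>
function cong_one_seq :: "nat \<Rightarrow> nat set \<Rightarrow> nat \<Rightarrow> nat" where
  "cong_one_seq t D n =
     nat ((1 - (\<Sum>d\<in>D. if 0 < d \<and> d \<le> n then int (cong_one_seq t D (n - d)) else 0)) mod int t)"
  by auto
termination by (relation "Wellfounded.measure (\<lambda>(t, D, n). n)") auto

declare cong_one_seq.simps [simp del]

lemma cong_one_seq_less: "0 < t \<Longrightarrow> cong_one_seq t D n < t"
  by (subst cong_one_seq.simps) (simp add: nat_less_iff)

lemma cong_one_seq_sum:
  assumes "0 < t" "finite D" "0 \<in> D" "\<forall>d\<in>D. d \<le> n"
  shows "[(\<Sum>d\<in>D. cong_one_seq t D (n - d)) = 1] (mod t)"
proof -
  define S where "S = (\<Sum>d\<in>D - {0}. int (cong_one_seq t D (n - d)))"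
  have "(\<Sum>d\<in>D. if 0 < d \<and> d \<le> n then int (cong_one_seq t D (n - d)) else 0) = S"
    unfolding S_def using assms(2,4) by (intro sum.mono_neutral_cong_right) auto
  then have "int (cong_one_seq t D n) = (1 - S) mod int t"
    using assms(1) by (subst cong_one_seq.simps) simp
  then have "[int (cong_one_seq t D n) + S = 1] (mod int t)"
    by (simp add: cong_def mod_add_left_eq)
  moreover have "int (\<Sum>d\<in>D. cong_one_seq t D (n - d)) = int (cong_one_seq t D n) + S"
    using assms(2,3) by (simp add: S_def sum.remove[of D 0])
  ultimately show ?thesis by (simp flip: cong_int_iff)
qed

lemma cong_one_seq_window:
  assumes "\<forall>d\<in>D. d \<le> W" and "\<forall>k<W. cong_one_seq t D (i + k) = cong_one_seq t D (j + k)"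
  shows "cong_one_seq t D (i + W) = cong_one_seq t D (j + W)"
proof -
  have "(if 0 < d \<and> d \<le> i + W then int (cong_one_seq t D (i + W - d)) else 0) =
        (if 0 < d \<and> d \<le> j + W then int (cong_one_seq t D (j + W - d)) else 0)" if "d \<in> D" for d
  proof (cases "d = 0")
    case False
    then have "i + W - d = i + (W - d)" "j + W - d = j + (W - d)" "W - d < W"
      using assms(1) that by auto
    then show ?thesis using assms(1,2) that by auto
  qed simp
  then show ?thesis by (subst (1 2) cong_one_seq.simps) (simp cong: sum.cong)
qed

lemma exists_sum_shifts_cong_one:
  fixes D :: "nat set"
  assumes "0 < t" "finite D" "0 \<in> D"
  obtains g :: "int \<Rightarrow> nat" where "\<And>n. g n < t" "\<And>n. [(\<Sum>d\<in>D. g (n - int d)) = 1] (mod t)"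
proof -
  define r where "r = cong_one_seq t D"
  define W where "W = Max D"
  have D_le: "\<forall>d\<in>D. d \<le> W" using assms(2) by (simp add: W_def)
  have r_range: "range r \<subseteq> {..<t}" using cong_one_seq_less[OF assms(1)] by (auto simp: r_def)
  then have "finite (range r)" using finite_subset by blast
  moreover have "r (i + W) = r (j + W)" if "\<forall>k<W. r (i + k) = r (j + k)" for i j
    using cong_one_seq_window[OF D_le] that by (simp add: r_def)
  ultimately obtain P i where "0 < P" "\<And>n. i \<le> n \<Longrightarrow> r (n + P) = r n"
    using eventually_periodic_if_window_determined by blast
  then obtain g where g_range: "range g \<subseteq> range r"
    and g_eq: "\<And>m n. i \<le> n \<Longrightarrow> [int n = m] (mod int P) \<Longrightarrow> g m = r n"
    using periodic_extension_to_int by blast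
  show ?thesis
  proof
    show "g n < t" for n using g_range r_range by auto
    fix n
    define N where "N = i + W + nat ((n - int (i + W)) mod int P)"
    have N_cong: "[int N = n] (mod int P)"
      using \<open>0 < P\<close> by (simp add: N_def cong_def mod_add_right_eq)
    have "g (n - int d) = r (N - d)" if "d \<in> D" for d
    proof (rule g_eq)
      show "i \<le> N - d" using D_le that by (auto simp: N_def)
      have "int (N - d) = int N - int d" using D_le that by (auto simp: N_def)
      then show "[int (N - d) = n - int d] (mod int P)"
        using cong_diff[OF N_cong cong_refl[of "int d"]] by simp
    qed
    then have "(\<Sum>d\<in>D. g (n - int d)) = (\<Sum>d\<in>D. r (N - d))" by simp
    moreover have "\<forall>d\<in>D. d \<le> N" using D_le by (auto simp: N_def)
    ultimately show "[(\<Sum>d\<in>D. g (n - int d)) = 1] (mod t)"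
      using cong_one_seq_sum[OF assms] by (simp add: r_def)
  qed
qed

lemma exists_sum_translates_cong_one:
  fixes \<Phi> :: "int set"
  assumes "0 < t" "finite \<Phi>" "\<Phi> \<noteq> {}"
  obtains g :: "int \<Rightarrow> nat" where "\<And>n. g n < t" "\<And>n. [(\<Sum>a\<in>\<Phi>. g (n - a)) = 1] (mod t)"
proof -
  define a0 where "a0 = Min \<Phi>"
  define D where "D = (\<lambda>a. nat (a - a0)) ` \<Phi>"
  have a0_le: "a0 \<le> a" if "a \<in> \<Phi>" for a
    using assms(2) that by (simp add: a0_def)
  have "a0 \<in> \<Phi>" using assms(2,3) by (simp add: a0_def)
  then have "0 \<in> D" unfolding D_def by force
  moreover have "finite D" using assms(2) by (simp add: D_def)
  ultimately obtain g where g_less: "\<And>n. g n < t" and g_cong: "\<And>n. [(\<Sum>d\<in>D. g (n - int d)) = 1] (mod t)"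
    using exists_sum_shifts_cong_one[OF assms(1)] by blast
  show ?thesis
  proof (rule that[of "\<lambda>n. g (n + a0)"])
    show "g (n + a0) < t" for n by (rule g_less)
    fix n
    have "(\<Sum>a\<in>\<Phi>. g (n - a + a0)) = (\<Sum>d\<in>D. g (n - int d))"
      unfolding D_def using a0_le by (subst sum.reindex) (auto simp: inj_on_def eq_nat_nat_iff algebra_simps)
    then show "[(\<Sum>a\<in>\<Phi>. g (n - a + a0)) = 1] (mod t)" using g_cong by simp
  qed
qed

text \<open>Makes the termination proof of \<open>greedy_colouring\<close> see that recursive calls are on earlier vertices.\<close>
declare image_cong [fundef_cong]

function greedy_colouring ::
    "('v::countable \<Rightarrow> 'v \<Rightarrow> bool) \<Rightarrow> ('v \<Rightarrow> nat) \<Rightarrow> 'p set \<Rightarrow> 'v \<Rightarrow> 'p set" where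
  "greedy_colouring R c Pal v =
     (SOME C. C \<subseteq> Pal - (\<Union>u\<in>{u. R u v \<and> to_nat u < to_nat v}. greedy_colouring R c Pal u) \<and>
        finite C \<and> card C = c v)"
  by auto
termination by (relation "Wellfounded.measure (\<lambda>(R, c, Pal, v). to_nat v)") auto

declare greedy_colouring.simps [simp del]

lemma greedy_colouring_spec:
  fixes R :: "'v::countable \<Rightarrow> 'v \<Rightarrow> bool" and Pal :: "'p set"
  assumes fin_nbrs: "\<And>v. finite {u. R u v}" and card_nbrs: "\<And>v. card {u. R u v} < D"
    and demand: "\<And>v. c v \<le> k" and palette: "infinite Pal \<or> k * D \<le> card Pal"
  defines "h \<equiv> greedy_colouring R c Pal"
  shows "h v \<subseteq> Pal - (\<Union>u\<in>{u. R u v \<and> to_nat u < to_nat v}. h u) \<and> finite (h v) \<and> card (h v) = c v"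
proof (induction v rule: measure_induct_rule[of to_nat])
  case (less v)
  define N where "N = {u. R u v \<and> to_nat u < to_nat v}"
  define U where "U = (\<Union>u\<in>N. h u)"
  have finN: "finite N" using fin_nbrs[of v] by (simp add: N_def)
  have "card U \<le> (\<Sum>u\<in>N. card (h u))" unfolding U_def by (rule card_UN_le[OF finN])
  also have "\<dots> \<le> card N * k" using less demand sum_bounded_above[of N "\<lambda>u. card (h u)" k]
    by (auto simp: N_def)
  also have "card N * k \<le> (D - 1) * k"
  proof (rule mult_right_mono)
    have "card N \<le> card {u. R u v}" by (rule card_mono[OF fin_nbrs]) (auto simp: N_def)
    then show "card N \<le> D - 1" using card_nbrs[of v] by linarith
  qed simp
  finally have card_U: "card U \<le> (D - 1) * k" .
  have finU: "finite U" using less finN by (auto simp: U_def N_def)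
  have "\<exists>C. C \<subseteq> Pal - U \<and> finite C \<and> card C = c v"
  proof (cases "finite Pal")
    case True
    have "k * D - (D - 1) * k \<le> card (Pal - U)"
      using diff_card_le_card_Diff[OF finU, of Pal] card_U palette True by linarith
    moreover have "k \<le> k * D - (D - 1) * k"
      using card_nbrs[of v] by (cases D) (auto simp: algebra_simps)
    ultimately have "c v \<le> card (Pal - U)" using demand[of v] by linarith
    then show ?thesis by (meson obtain_subset_with_card_n finite_subset True Diff_subset)
  next
    case False
    then have "infinite (Pal - U)" using finU by simp
    then show ?thesis by (meson infinite_arbitrarily_large)
  qed
  then have "h v \<subseteq> Pal - U \<and> finite (h v) \<and> card (h v) = c v"
    unfolding h_def U_def N_def greedy_colouring.simps[of R c Pal v] by (rule someI_ex)
  then show ?case by (simp add: U_def N_def)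
qed

lemma greedy_set_colouring:
  fixes R :: "'v::countable \<Rightarrow> 'v \<Rightarrow> bool" and Pal :: "'p set"
  assumes "symp R" and "\<And>v. finite {u. R u v}" and "\<And>v. card {u. R u v} < D"
    and "\<And>v. c v \<le> k" and "infinite Pal \<or> k * D \<le> card Pal"
  obtains h :: "'v \<Rightarrow> 'p set" where "\<And>v. h v \<subseteq> Pal" "\<And>v. finite (h v)" "\<And>v. card (h v) = c v"
    "\<And>u v. R u v \<Longrightarrow> u \<noteq> v \<Longrightarrow> h u \<inter> h v = {}"
proof
  let ?h = "greedy_colouring R c Pal"
  have spec: "?h v \<subseteq> Pal - (\<Union>u\<in>{u. R u v \<and> to_nat u < to_nat v}. ?h u) \<and>
      finite (?h v) \<and> card (?h v) = c v" for v
    using assms(2-5) by (rule greedy_colouring_spec)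
  show "?h v \<subseteq> Pal" "finite (?h v)" "card (?h v) = c v" for v
    using spec[of v] by auto
  show "?h u \<inter> ?h v = {}" if "R u v" "u \<noteq> v" for u v
  proof (cases "to_nat u < to_nat v")
    case True
    then show ?thesis using spec[of v] that by blast
  next
    case False
    then have "to_nat v < to_nat u" using that(2) by (metis linorder_neqE_nat to_nat_split)
    moreover have "R v u" using \<open>symp R\<close> that(1) by (rule sympD)
    ultimately show ?thesis using spec[of u] by blast
  qed
qed

definition lin_form :: "('n::finite \<Rightarrow> int) \<Rightarrow> int ^ 'n \<Rightarrow> int" where
  "lin_form w x = (\<Sum>i\<in>UNIV. w i * x $ i)"

lemma lin_form_diff: "lin_form w (x - y) = lin_form w x - lin_form w y"
  by (simp add: lin_form_def sum_subtractf algebra_simps)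

lemma lin_form_scale_add_coord:
  "lin_form (\<lambda>j. k * w j + (if j = i then 1 else 0)) x = k * lin_form w x + x $ i"
proof -
  have "lin_form (\<lambda>j. k * w j + (if j = i then 1 else 0)) x
      = (\<Sum>j\<in>UNIV. k * (w j * x $ j)) + (\<Sum>j\<in>UNIV. if j = i then x $ j else 0)"
    unfolding lin_form_def by (subst sum.distrib[symmetric]) (rule sum.cong, auto simp: algebra_simps)
  then show ?thesis by (simp add: lin_form_def sum_distrib_left)
qed

lemma lin_form_nonzero_on:
  fixes Ds :: "(int ^ 'n) set"
  assumes "finite Ds" "0 \<notin> Ds"
  obtains w where "\<And>d. d \<in> Ds \<Longrightarrow> lin_form w d \<noteq> 0"
  using assms
proof (induction Ds arbitrary: thesis rule: finite_induct)
  case empty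
  then show ?case by blast
next
  case (insert d Ds)
  obtain w where w: "\<And>d'. d' \<in> Ds \<Longrightarrow> lin_form w d' \<noteq> 0" using insert by auto
  show ?case
  proof (cases "lin_form w d = 0")
    case False
    then show ?thesis using w insert.prems(1) by blast
  next
    case True
    obtain i where i: "d $ i \<noteq> 0" using insert.prems(2) by (metis insertCI vec_eq_iff zero_index)
    define k where "k = 1 + (\<Sum>d'\<in>Ds. \<bar>d' $ i\<bar>)"
    have lin_w': "lin_form (\<lambda>j. k * w j + (if j = i then 1 else 0)) x = k * lin_form w x + x $ i" for x
      by (rule lin_form_scale_add_coord)
    show ?thesis
    proof (rule insert.prems(1))
      fix d' assume "d' \<in> insert d Ds"
      then consider "d' = d" | "d' \<in> Ds" by blast
      then show "lin_form (\<lambda>j. k * w j + (if j = i then 1 else 0)) d' \<noteq> 0"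
      proof cases
        case 1
        then show ?thesis using True i lin_w' by simp
      next
        case 2
        \<comment> \<open>the new coordinate term is smaller than \<open>k\<close>, the old value is a nonzero multiple of \<open>k\<close>\<close>
        have "\<bar>d' $ i\<bar> < k"
          using member_le_sum[of d' Ds "\<lambda>d'. \<bar>d' $ i\<bar>"] 2 insert.hyps(1) by (simp add: k_def)
        moreover have "k \<le> \<bar>k * lin_form w d'\<bar>"
        proof -
          have "1 \<le> \<bar>lin_form w d'\<bar>" using w[OF 2] by linarith
          moreover have "1 \<le> k" by (simp add: k_def sum_nonneg)
          ultimately show ?thesis by (simp add: abs_mult mult_le_cancel_left1)
        qed
        ultimately show ?thesis using lin_w' by auto
      qed
    qed
  qed
qed

lemma exists_int_functional_inj_on:
  fixes T :: "(int ^ 'n) set"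
  assumes "finite T"
  obtains \<phi> :: "int ^ 'n \<Rightarrow> int" where "\<And>x y. \<phi> (x - y) = \<phi> x - \<phi> y" and "inj_on \<phi> T"
proof -
  have "finite ((\<lambda>(u, v). u - v) ` (T \<times> T - Id))" using assms by simp
  moreover have "0 \<notin> (\<lambda>(u, v). u - v) ` (T \<times> T - Id)" by auto
  ultimately obtain w where "\<And>d. d \<in> (\<lambda>(u, v). u - v) ` (T \<times> T - Id) \<Longrightarrow> lin_form w d \<noteq> 0"
    using lin_form_nonzero_on by blast
  then have "inj_on (lin_form w) T" by (force simp: inj_on_def lin_form_diff)
  with lin_form_diff show thesis by (rule that)
qed

lemma exists_translate_disjoint_selection:
  fixes T :: "'g::ab_group_add set" and \<phi> :: "'g \<Rightarrow> 'h::{ab_group_add, countable}"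
    and F :: "'a set"
  assumes "finite T" "T \<noteq> {}" "inj_on \<phi> T" "\<And>n. c n \<le> k"
    and "infinite F \<or> k * (card T)\<^sup>2 \<le> card F"
  obtains C :: "'h \<Rightarrow> 'a set" where "\<And>n. C n \<subseteq> F" "\<And>n. finite (C n)" "\<And>n. card (C n) = c n"
    "\<And>n u v. u \<in> T \<Longrightarrow> v \<in> T \<Longrightarrow> u \<noteq> v \<Longrightarrow> C (n - \<phi> u) \<inter> C (n - \<phi> v) = {}"
proof -
  define R where "R m m' \<longleftrightarrow> (\<exists>u\<in>T. \<exists>v\<in>T. u \<noteq> v \<and> m' - m = \<phi> u - \<phi> v)" for m m'
  have "symp R"
  proof (rule sympI)
    fix m m' assume "R m m'"
    then obtain u v where uv: "u \<in> T" "v \<in> T" "u \<noteq> v" and eq: "m' - m = \<phi> u - \<phi> v"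
      by (auto simp: R_def)
    have "m - m' = \<phi> v - \<phi> u" by (metis eq minus_diff_eq)
    with uv show "R m' m" unfolding R_def by (metis (no_types))
  qed
  have nbrs: "{m. R m m'} \<subseteq> (\<lambda>(u, v). m' - (\<phi> u - \<phi> v)) ` (T \<times> T - Id)" for m'
  proof
    fix m assume "m \<in> {m. R m m'}"
    then obtain u v where "u \<in> T" "v \<in> T" "u \<noteq> v" "m' - m = \<phi> u - \<phi> v" by (auto simp: R_def)
    moreover from this(4) have "m = m' - (\<phi> u - \<phi> v)" by (simp add: algebra_simps)
    ultimately show "m \<in> (\<lambda>(u, v). m' - (\<phi> u - \<phi> v)) ` (T \<times> T - Id)"
      by (intro image_eqI[of _ _ "(u, v)"]) auto
  qed
  have fin_nbrs: "finite {m. R m m'}" for m'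
    using finite_subset[OF nbrs] assms(1) by blast
  have card_nbrs: "card {m. R m m'} < (card T)\<^sup>2" for m'
  proof -
    have "card {m. R m m'} \<le> card ((\<lambda>(u, v). m' - (\<phi> u - \<phi> v)) ` (T \<times> T - Id))"
      using nbrs assms(1) by (intro card_mono) auto
    also have "\<dots> \<le> card (T \<times> T - Id)"
      using assms(1) by (intro card_image_le) auto
    also have "\<dots> < card (T \<times> T)"
      using assms(1,2) by (intro psubset_card_mono) auto
    finally show ?thesis by (simp add: card_cartesian_product power2_eq_square)
  qed
  obtain C where C: "\<And>n. C n \<subseteq> F" "\<And>n. finite (C n)" "\<And>n. card (C n) = c n"
    and C_disj: "\<And>m m'. R m m' \<Longrightarrow> m \<noteq> m' \<Longrightarrow> C m \<inter> C m' = {}"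
    using greedy_set_colouring[where c = c, OF \<open>symp R\<close> fin_nbrs card_nbrs assms(4,5)] by blast
  show thesis
  proof (rule that[OF C])
    fix n u v assume "u \<in> T" "v \<in> T" "u \<noteq> v"
    moreover from this have "\<phi> u \<noteq> \<phi> v" using assms(3) by (auto dest: inj_onD)
    ultimately show "C (n - \<phi> u) \<inter> C (n - \<phi> v) = {}"
      by (intro C_disj) (auto simp: R_def)
  qed
qed

lemma disjoint_family_on_translated_tiles:
  fixes T :: "'g::ab_group_add set" and \<phi> :: "'g \<Rightarrow> 'h::ab_group_add" and C :: "'h \<Rightarrow> 'a set set"
  assumes \<phi>_diff: "\<And>x y. \<phi> (x - y) = \<phi> x - \<phi> y" and "disjoint F" and "\<And>n. C n \<subseteq> F"
    and C_disj: "\<And>n u v. u \<in> T \<Longrightarrow> v \<in> T \<Longrightarrow> u \<noteq> v \<Longrightarrow> C (n - \<phi> u) \<inter> C (n - \<phi> v) = {}"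
  shows "disjoint_family_on (\<lambda>(x, A). ((\<lambda>v. v + x) ` T) \<times> A) {(x, A). A \<in> C (\<phi> x)}"
  unfolding disjoint_family_on_def
proof (intro ballI impI)
  fix p q assume "p \<in> {(x, A). A \<in> C (\<phi> x)}" "q \<in> {(x, A). A \<in> C (\<phi> x)}" "p \<noteq> q"
  then obtain x A y B where p: "p = (x, A)" "A \<in> C (\<phi> x)" and q: "q = (y, B)" "B \<in> C (\<phi> y)"
    by auto
  show "(case p of (x, A) \<Rightarrow> ((\<lambda>v. v + x) ` T) \<times> A) \<inter> (case q of (x, A) \<Rightarrow> ((\<lambda>v. v + x) ` T) \<times> A) = {}"
  proof (rule ccontr)
    assume "\<not> ?thesis"
    then obtain u v z where "u \<in> T" "v \<in> T" "u + x = v + y" "z \<in> A" "z \<in> B"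
      using p q by auto
    have "A = B" using \<open>disjoint F\<close> assms(3) p(2) q(2) \<open>z \<in> A\<close> \<open>z \<in> B\<close>
      by (meson disjointD disjoint_iff subsetD)
    then have "u \<noteq> v" using \<open>p \<noteq> q\<close> p q \<open>u + x = v + y\<close> by auto
    \<comment> \<open>with \<open>n = \<phi> (u + x)\<close> the common tile lies in \<open>C (n - \<phi> u) \<inter> C (n - \<phi> v)\<close>\<close>
    have "\<phi> x = \<phi> (u + x) - \<phi> u" using \<phi>_diff[of "u + x" u] by simp
    moreover have "\<phi> y = \<phi> (u + x) - \<phi> v" using \<phi>_diff[of "v + y" v] \<open>u + x = v + y\<close> by simp
    ultimately show False
      using C_disj[OF \<open>u \<in> T\<close> \<open>v \<in> T\<close> \<open>u \<noteq> v\<close>, of "\<phi> (u + x)"] \<open>A = B\<close> p(2) q(2) by auto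
  qed
qed

lemma fibre_translated_tiles:
  fixes T :: "'g::ab_group_add set" and \<phi> :: "'g \<Rightarrow> 'h::ab_group_add" and C :: "'h \<Rightarrow> 'a set set"
  assumes \<phi>_diff: "\<And>x y. \<phi> (x - y) = \<phi> x - \<phi> y"
  shows "{y. (p, y) \<in> (\<Union>(x, A)\<in>{(x, A). A \<in> C (\<phi> x)}. ((\<lambda>v. v + x) ` T) \<times> A)}
    = \<Union>(\<Union>v\<in>T. C (\<phi> p - \<phi> v))"
proof (intro set_eqI iffI)
  fix y assume "y \<in> {y. (p, y) \<in> (\<Union>(x, A)\<in>{(x, A). A \<in> C (\<phi> x)}. ((\<lambda>v. v + x) ` T) \<times> A)}"
  then obtain x A v where "A \<in> C (\<phi> x)" "y \<in> A" "v \<in> T" "p = v + x" by auto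
  moreover from \<open>p = v + x\<close> have "\<phi> x = \<phi> p - \<phi> v" using \<phi>_diff[of p v] by simp
  ultimately show "y \<in> \<Union>(\<Union>v\<in>T. C (\<phi> p - \<phi> v))" by auto
next
  fix y assume "y \<in> \<Union>(\<Union>v\<in>T. C (\<phi> p - \<phi> v))"
  then obtain A v where "v \<in> T" "A \<in> C (\<phi> (p - v))" "y \<in> A" by (auto simp: \<phi>_diff)
  moreover have "p \<in> (\<lambda>u. u + (p - v)) ` T" using \<open>v \<in> T\<close> by (auto intro: image_eqI[of _ _ v])
  ultimately show "y \<in> {y. (p, y) \<in> (\<Union>(x, A)\<in>{(x, A). A \<in> C (\<phi> x)}. ((\<lambda>v. v + x) ` T) \<times> A)}"
    by blast
qed

theorem lemma13:
  fixes t :: nat and T :: "(int ^ 'b) set" and S :: "'a set" and F :: "'a set set"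
  assumes "t \<ge> 1"
    and "finite T" and "T \<noteq> {}"
    and "\<forall>A\<in>F. A \<subseteq> S"
    and "disjoint F"
    and "infinite F \<or> (t - 1) * (card T)^2 \<le> card F"
  shows "\<exists>X :: ((int ^ 'b) \<times> 'a) set. X \<subseteq> UNIV \<times> S \<and>
    (\<exists>P. P \<subseteq> UNIV \<times> F \<and>
         disjoint_family_on (\<lambda>(x, A). ((\<lambda>v. v + x) ` T) \<times> A) P \<and>
         X = (\<Union>(x, A)\<in>P. ((\<lambda>v. v + x) ` T) \<times> A)) \<and>
    (\<forall>x. \<exists>m::nat. [m = 1] (mod t) \<and>
         (\<exists>G. G \<subseteq> F \<and> finite G \<and> card G = m \<and> {y\<in>S. (x, y) \<in> X} = \<Union>G))"
proof -
  obtain \<phi> :: "int ^ 'b \<Rightarrow> int" where \<phi>_diff: "\<And>x y. \<phi> (x - y) = \<phi> x - \<phi> y" and inj: "inj_on \<phi> T"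
    using exists_int_functional_inj_on[OF assms(2)] by blast
  obtain g where g_less: "\<And>n. g n < t" and g_cong: "\<And>n. [(\<Sum>a\<in>\<phi> ` T. g (n - a)) = 1] (mod t)"
    using exists_sum_translates_cong_one[of t "\<phi> ` T"] assms(1-3) by auto
  have "g n \<le> t - 1" for n using g_less[of n] by linarith
  then obtain C where C_F: "\<And>n. C n \<subseteq> F" and C_fin: "\<And>n. finite (C n)"
    and C_card: "\<And>n. card (C n) = g n"
    and C_disj: "\<And>n u v. u \<in> T \<Longrightarrow> v \<in> T \<Longrightarrow> u \<noteq> v \<Longrightarrow> C (n - \<phi> u) \<inter> C (n - \<phi> v) = {}"
    using exists_translate_disjoint_selection[where c = g, OF assms(2,3) inj _ assms(6)]
    by blast
  define P where "P = {(x, A). A \<in> C (\<phi> x)}"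
  define X where "X = (\<Union>(x, A)\<in>P. ((\<lambda>v. v + x) ` T) \<times> A)"
  have fibre: "\<exists>m::nat. [m = 1] (mod t) \<and>
      (\<exists>G. G \<subseteq> F \<and> finite G \<and> card G = m \<and> {y\<in>S. (x, y) \<in> X} = \<Union>G)" for x
  proof (intro exI conjI)
    define G where "G = (\<Union>v\<in>T. C (\<phi> x - \<phi> v))"
    show "G \<subseteq> F" "finite G" using C_F C_fin assms(2) by (auto simp: G_def)
    have "{y. (x, y) \<in> X} = \<Union>G"
      unfolding X_def P_def G_def by (rule fibre_translated_tiles[OF \<phi>_diff])
    moreover have "\<Union>G \<subseteq> S" using \<open>G \<subseteq> F\<close> assms(4) by blast
    ultimately show "{y\<in>S. (x, y) \<in> X} = \<Union>G" by blast
    have "card G = (\<Sum>v\<in>T. g (\<phi> x - \<phi> v))"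
      unfolding G_def using assms(2) C_fin C_disj by (subst card_UN_disjoint) (auto simp: C_card)
    also have "\<dots> = (\<Sum>a\<in>\<phi> ` T. g (\<phi> x - a))"
      using inj by (simp add: sum.reindex)
    finally show "[card G = 1] (mod t)" using g_cong by simp
  qed simp
  have "X \<subseteq> UNIV \<times> S" using C_F assms(4) by (auto simp: X_def P_def)
  moreover have "P \<subseteq> UNIV \<times> F" using C_F by (auto simp: P_def)
  moreover have "disjoint_family_on (\<lambda>(x, A). ((\<lambda>v. v + x) ` T) \<times> A) P"
    unfolding P_def using \<phi>_diff assms(5) C_F C_disj by (rule disjoint_family_on_translated_tiles)
  ultimately show ?thesis using fibre unfolding X_def by blast
qed

end
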